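(* The map $\rho:\mathrm{eval}_{-1}(\mathcal{B})\to\mathrm{GL}(2,\mathbb{Z})$ is an injective group homomorphism satisfying $\det\rho(B)=\det B$ for all $B\in\mathrm{eval}_{-1}(\mathcal{B})$.
   Context: For a matrix $A$ with Laurent polynomial entries, $\overline{A}$ denotes the matrix obtained by substituting $t\mapsto t^{-1}$ in every entry. Let $J_3=\begin{pmatrix}1&-t^{-1}&-t^{-1}\\-t&1&-t^{-1}\\-t&-t&1\end{pmatrix}$, $v=(t,t^2,t^3)$ (a row vector) and $\vec{1}=(1,1,1)^T$. The formal Burau group is $\mathcal{B}=\{A\in\mathrm{GL}(3,\mathbb{Z}[t,t^{-1}]) : vA=v,\ A\vec 1=\vec 1,\ \overline{A}J_3A^T=J_3\}$. $\mathrm{eval}_{-1}:\mathcal{B}\to\mathrm{GL}(3,\mathbb{Z})$ is evaluation of all entries at $t=-1$. For $B=(B_{ij})\in\mathrm{eval}_{-1}(\mathcal{B})$, $\rho(B)=\begin{pmatrix}1-B_{13}&1-B_{11}\\1-B_{33}&1-B_{31}\end{pmatrix}$. *)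

theory Defs
  imports "HOL-Analysis.Analysis" "HOL-Library.Numeral_Type"
          "HOL-Computational_Algebra.Formal_Laurent_Series"
begin

text \<open>Laurent polynomials Z[t,t^-1] are the formal Laurent series over int with
  finitely many nonzero coefficients; t is fls_X.\<close>

definition laurent_poly :: "int fls \<Rightarrow> bool" where
  "laurent_poly f \<longleftrightarrow> finite {n. fls_nth f n \<noteq> 0}"

definition lbar :: "int fls \<Rightarrow> int fls" where
  "lbar f = (\<Sum>n\<in>{n. fls_nth f n \<noteq> 0}. fls_const (fls_nth f n) * fls_X_intpow (-n))"

definition leval_m1 :: "int fls \<Rightarrow> int" where
  "leval_m1 f = (\<Sum>n\<in>{n. fls_nth f n \<noteq> 0}. fls_nth f n * (if even n then 1 else -1))"

definition mbar :: "int fls ^3^3 \<Rightarrow> int fls ^3^3" where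
  "mbar A = (\<chi> i j. lbar (A $ i $ j))"

definition meval_m1 :: "int fls ^3^3 \<Rightarrow> int ^3^3" where
  "meval_m1 A = (\<chi> i j. leval_m1 (A $ i $ j))"

definition laurent_matrix :: "int fls ^3^3 \<Rightarrow> bool" where
  "laurent_matrix A \<longleftrightarrow> (\<forall>i j. laurent_poly (A $ i $ j))"

definition GL3L :: "(int fls ^3^3) set" where
  "GL3L = {A. laurent_matrix A \<and>
              (\<exists>A'. laurent_matrix A' \<and> A ** A' = mat 1 \<and> A' ** A = mat 1)}"

text \<open>Indices 1,2,3 of the paper are the elements 1,2,3 of the numeral type 3.\<close>
definition J3 :: "int fls ^3^3" where
  "J3 = (\<chi> i j.
     if i = 1 then (if j = 1 then 1 else if j = 2 then - fls_X_inv else - fls_X_inv)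
     else if i = 2 then (if j = 1 then - fls_X else if j = 2 then 1 else - fls_X_inv)
     else (if j = 1 then - fls_X else if j = 2 then - fls_X else 1))"

definition vB :: "int fls ^3" where
  "vB = (\<chi> i. if i = 1 then fls_X else if i = 2 then fls_X ^ 2 else fls_X ^ 3)"

definition formal_burau :: "(int fls ^3^3) set" where
  "formal_burau = {A \<in> GL3L. vB v* A = vB \<and> A *v (\<chi> i. 1) = (\<chi> i. 1)
                     \<and> mbar A ** J3 ** transpose A = J3}"

definition rho :: "int ^3^3 \<Rightarrow> int ^2^2" where
  "rho B = (\<chi> i j.
     if i = 1 then (if j = 1 then 1 - B $ 1 $ 3 else 1 - B $ 1 $ 1)
     else (if j = 1 then 1 - B $ 3 $ 3 else 1 - B $ 3 $ 1))"

end

(* Evaluation at t = -1 is a ring homomorphism on Laurent polynomials, so for A in the formal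
   Burau group B = eval(A) is an integer matrix with det B = +-1, B 1 = 1 and w B = w, where
   w = (-1, 1, -1) is the value of v at t = -1.
   These linear conditions determine B from its four corner entries, which rho reads off, so rho
   is injective, and multiplicativity and det (rho B) = det B become polynomial identities in
   the corner entries. *)

theory Submission imports Defs begin

context includes fps_syntax
begin

abbreviation fls_support :: "'a::zero fls \<Rightarrow> int set" where
  "fls_support f \<equiv> {n. f $$ n \<noteq> 0}"

lemma fls_times_nth_support:
  fixes f g :: "'a::comm_ring_1 fls"
  assumes "finite (fls_support f)"
  shows "(f * g) $$ n = (\<Sum>i\<in>fls_support f. f $$ i * g $$ (n - i))"
proof -
  let ?I = "{fls_subdegree f..n - fls_subdegree g}"
  let ?h = "\<lambda>i. f $$ i * g $$ (n - i)"
  have fin: "finite (?I \<union> fls_support f)"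
    using assms by blast
  have outside_I: "?h i = 0" if "i \<notin> ?I" for i
  proof (cases "f $$ i = 0")
    case False
    then have "fls_subdegree f \<le> i"
      by (rule fls_subdegree_leI)
    with that have "n - i < fls_subdegree g"
      by simp
    then show ?thesis
      by simp
  qed simp
  have "(f * g) $$ n = sum ?h ?I"
    by (rule fls_times_nth(2))
  also have "\<dots> = sum ?h (?I \<union> fls_support f)"
    using outside_I by (intro sum.mono_neutral_left[OF fin]) auto
  also have "\<dots> = sum ?h (fls_support f)"
    by (intro sum.mono_neutral_right[OF fin]) auto
  finally show ?thesis .
qed

lemma fls_support_times_subset:
  fixes f g :: "'a::comm_ring_1 fls"
  assumes "finite (fls_support f)"
  shows "fls_support (f * g) \<subseteq> (\<lambda>(i, j). i + j) ` (fls_support f \<times> fls_support g)"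
proof
  fix n
  assume "n \<in> fls_support (f * g)"
  then have "(\<Sum>i\<in>fls_support f. f $$ i * g $$ (n - i)) \<noteq> 0"
    by (simp add: fls_times_nth_support[OF assms])
  then obtain i where "i \<in> fls_support f" "f $$ i * g $$ (n - i) \<noteq> 0"
    by (rule sum.not_neutral_contains_not_neutral)
  then have "(i, n - i) \<in> fls_support f \<times> fls_support g"
    by auto
  then show "n \<in> (\<lambda>(i, j). i + j) ` (fls_support f \<times> fls_support g)"
    by (rule rev_image_eqI) simp
qed

lemma laurent_poly_add: "laurent_poly f \<Longrightarrow> laurent_poly g \<Longrightarrow> laurent_poly (f + g)"
  unfolding laurent_poly_def
  by (rule finite_subset[of _ "fls_support f \<union> fls_support g"]) auto

lemma laurent_poly_mult: "laurent_poly f \<Longrightarrow> laurent_poly g \<Longrightarrow> laurent_poly (f * g)"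
  unfolding laurent_poly_def
  by (rule finite_subset[OF fls_support_times_subset]) auto

lemma laurent_poly_sum:
  "(\<And>i. i \<in> I \<Longrightarrow> laurent_poly (h i)) \<Longrightarrow> laurent_poly (\<Sum>i\<in>I. h i)"
  by (induction I rule: infinite_finite_induct)
    (simp_all add: laurent_poly_add laurent_poly_def[of 0])

definition neg_one_pow :: "int \<Rightarrow> int" where
  "neg_one_pow n = (if even n then 1 else -1)"

lemma neg_one_pow_add: "neg_one_pow (m + n) = neg_one_pow m * neg_one_pow n"
  by (auto simp: neg_one_pow_def)

lemma leval_m1_eq_sum_superset:
  assumes "finite F" "fls_support f \<subseteq> F"
  shows "leval_m1 f = (\<Sum>n\<in>F. f $$ n * neg_one_pow n)"
  unfolding leval_m1_def neg_one_pow_def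
  by (rule sum.mono_neutral_left) (use assms in auto)

lemma leval_m1_add:
  assumes "laurent_poly f" "laurent_poly g"
  shows "leval_m1 (f + g) = leval_m1 f + leval_m1 g"
proof -
  let ?S = "fls_support f \<union> fls_support g"
  have S: "finite ?S" using assms unfolding laurent_poly_def by blast
  have "leval_m1 (f + g) = (\<Sum>n\<in>?S. (f + g) $$ n * neg_one_pow n)"
    by (rule leval_m1_eq_sum_superset[OF S]) auto
  also have "\<dots> = (\<Sum>n\<in>?S. f $$ n * neg_one_pow n) + (\<Sum>n\<in>?S. g $$ n * neg_one_pow n)"
    by (simp add: distrib_right sum.distrib)
  also have "\<dots> = leval_m1 f + leval_m1 g"
    by (simp add: leval_m1_eq_sum_superset[OF S])
  finally show ?thesis .
qed

lemma leval_m1_mult: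
  assumes "laurent_poly f" "laurent_poly g"
  shows "leval_m1 (f * g) = leval_m1 f * leval_m1 g"
proof -
  let ?F = "fls_support f" and ?s = neg_one_pow
  define S where "S = (\<lambda>(i, j). i + j) ` (fls_support f \<times> fls_support g)"
  have F: "finite ?F" and S: "finite S"
    using assms unfolding laurent_poly_def S_def by auto
  have shifted: "(\<Sum>n\<in>S. g $$ (n - i) * ?s (n - i)) = leval_m1 g" if "i \<in> ?F" for i
  proof -
    have "fls_support g \<subseteq> (\<lambda>n. n - i) ` S"
      using that unfolding S_def by (force intro: image_eqI[of _ _ "i + _"])
    then have "leval_m1 g = (\<Sum>m\<in>(\<lambda>n. n - i) ` S. g $$ m * ?s m)"
      using S by (intro leval_m1_eq_sum_superset) auto
    also have "\<dots> = (\<Sum>n\<in>S. g $$ (n - i) * ?s (n - i))"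
      by (simp add: sum.reindex inj_on_def)
    finally show ?thesis by simp
  qed
  have "leval_m1 (f * g) = (\<Sum>n\<in>S. (f * g) $$ n * ?s n)"
    using leval_m1_eq_sum_superset[OF S] fls_support_times_subset[OF F] unfolding S_def by blast
  also have "\<dots> = (\<Sum>i\<in>?F. \<Sum>n\<in>S. f $$ i * g $$ (n - i) * ?s n)"
    by (simp add: fls_times_nth_support[OF F] sum_distrib_right sum.swap[of _ S])
  also have "\<dots> = (\<Sum>i\<in>?F. \<Sum>n\<in>S. (f $$ i * ?s i) * (g $$ (n - i) * ?s (n - i)))"
  proof (intro sum.cong refl)
    fix i n
    show "f $$ i * g $$ (n - i) * ?s n = f $$ i * ?s i * (g $$ (n - i) * ?s (n - i))"
      using neg_one_pow_add[of i "n - i"] by simp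
  qed
  also have "\<dots> = (\<Sum>i\<in>?F. f $$ i * ?s i * leval_m1 g)"
    by (simp add: shifted flip: sum_distrib_left)
  also have "\<dots> = leval_m1 f * leval_m1 g"
    by (simp add: leval_m1_eq_sum_superset[OF F] sum_distrib_right)
  finally show ?thesis .
qed

lemma leval_m1_sum:
  "(\<And>i. i \<in> I \<Longrightarrow> laurent_poly (h i)) \<Longrightarrow> leval_m1 (\<Sum>i\<in>I. h i) = (\<Sum>i\<in>I. leval_m1 (h i))"
  by (induction I rule: infinite_finite_induct)
    (simp_all add: leval_m1_add laurent_poly_sum leval_m1_def[of 0])

lemma laurent_poly_fls_X_power: "laurent_poly (fls_X ^ k)"
  unfolding laurent_poly_def by (rule finite_subset[of _ "{int k}"]) auto

lemma leval_m1_fls_X_power: "leval_m1 (fls_X ^ k) = (-1) ^ k"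
  by (subst leval_m1_eq_sum_superset[of "{int k}"]) (auto simp: neg_one_pow_def)

end

lemma leval_m1_one: "leval_m1 1 = 1"
  using leval_m1_fls_X_power[of 0] by simp

lemma meval_m1_mult:
  assumes "laurent_matrix A" "laurent_matrix B"
  shows "meval_m1 (A ** B) = meval_m1 A ** meval_m1 B"
  using assms unfolding meval_m1_def matrix_matrix_mult_def laurent_matrix_def
  by (simp add: leval_m1_sum leval_m1_mult laurent_poly_mult)

lemma meval_m1_mat_one: "meval_m1 (mat 1) = mat 1"
  unfolding meval_m1_def mat_def vec_eq_iff by (simp add: leval_m1_one leval_m1_def[of 0])

definition vB_m1 :: "int ^ 3" where
  "vB_m1 = (\<chi> i. if i = 2 then 1 else -1)"

lemma laurent_poly_vB: "laurent_poly (vB $ i)"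
  unfolding vB_def by (simp add: laurent_poly_fls_X_power[of 1, simplified] laurent_poly_fls_X_power)

lemma leval_m1_vB: "leval_m1 (vB $ i) = vB_m1 $ i"
  using exhaust_3[of i] leval_m1_fls_X_power[of 1]
  by (auto simp: vB_def vB_m1_def leval_m1_fls_X_power)

lemma formal_burau_eval:
  assumes "A \<in> formal_burau"
  shows "meval_m1 A *v (\<chi> i. 1) = (\<chi> i. 1)"
    and "vB_m1 v* meval_m1 A = vB_m1"
    and "det (meval_m1 A) dvd 1"
proof -
  from assms obtain A' where A: "laurent_matrix A" and A': "laurent_matrix A'"
    and inverse: "A ** A' = mat 1"
    and fixes_vB: "vB v* A = vB" and fixes_ones: "A *v (\<chi> i. 1) = (\<chi> i. 1)"
    unfolding formal_burau_def GL3L_def by blast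
  have entries: "laurent_poly (A $ i $ j)" for i j
    using A unfolding laurent_matrix_def by blast
  have "leval_m1 ((A *v (\<chi> i. 1)) $ i) = 1" for i
    using fixes_ones leval_m1_one by simp
  then show "meval_m1 A *v (\<chi> i. 1) = (\<chi> i. 1)"
    by (simp add: vec_eq_iff matrix_vector_mult_def meval_m1_def leval_m1_sum entries)
  have "leval_m1 ((vB v* A) $ j) = vB_m1 $ j" for j
    using fixes_vB leval_m1_vB by simp
  then show "vB_m1 v* meval_m1 A = vB_m1"
    by (simp add: vec_eq_iff vector_matrix_mult_def meval_m1_def leval_m1_sum leval_m1_mult
        laurent_poly_mult laurent_poly_vB leval_m1_vB entries)
  have "meval_m1 A ** meval_m1 A' = mat 1"
    using meval_m1_mult[OF A A'] by (simp add: inverse meval_m1_mat_one)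
  then have "det (meval_m1 A) * det (meval_m1 A') = 1"
    by (metis det_I det_mul)
  then show "det (meval_m1 A) dvd 1"
    by (rule dvdI[OF sym])
qed

definition corner_matrix :: "int \<Rightarrow> int \<Rightarrow> int \<Rightarrow> int \<Rightarrow> int ^ 3 ^ 3" where
  "corner_matrix a b c d = (\<chi> i j.
     if i = 1 then (if j = 1 then a else if j = 2 then 1 - a - b else b)
     else if i = 2 then (if j = 1 then a + c - 1 else if j = 2 then 3 - a - b - c - d else b + d - 1)
     else (if j = 1 then c else if j = 2 then 1 - c - d else d))"

lemma corner_matrix_eq:
  fixes B :: "int ^ 3 ^ 3"
  assumes "B *v (\<chi> i. 1) = (\<chi> i. 1)" and "vB_m1 v* B = vB_m1"
  shows "B = corner_matrix (B $ 1 $ 1) (B $ 1 $ 3) (B $ 3 $ 1) (B $ 3 $ 3)"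
proof -
  have rows: "B $ i $ 1 + B $ i $ 2 + B $ i $ 3 = 1" for i
    using assms(1) by (simp add: vec_eq_iff matrix_vector_mult_def sum_3)
  have columns: "B $ 2 $ j - B $ 1 $ j - B $ 3 $ j = vB_m1 $ j" for j
    using assms(2) by (simp add: vec_eq_iff vector_matrix_mult_def sum_3 vB_m1_def)
  show ?thesis
    using rows[of 1] rows[of 3] columns[of 1] columns[of 2] columns[of 3]
    by (simp add: vec_eq_iff forall_3 corner_matrix_def vB_m1_def)
qed

(* rho B is the matrix of x \<mapsto> x B on the invariant lattice {x. x \<bullet> 1 = 0} in the basis
   e2 - e3, e2 - e1. This explains multiplicativity, and since the fixed vector vB_m1 spans a
   complement of that lattice, also det (rho B) = det B. *)
lemma rho_corner_matrix_mult:
  "rho (corner_matrix a b c d ** corner_matrix a' b' c' d')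
     = rho (corner_matrix a b c d) ** rho (corner_matrix a' b' c' d')"
  by (simp add: vec_eq_iff forall_2 rho_def corner_matrix_def matrix_matrix_mult_def sum_3 sum_2
      algebra_simps)

lemma det_rho_corner_matrix: "det (rho (corner_matrix a b c d)) = det (corner_matrix a b c d)"
  by (simp add: det_2 det_3 rho_def corner_matrix_def algebra_simps)

lemma rho_corner_matrix_eq_iff:
  "rho (corner_matrix a b c d) = rho (corner_matrix a' b' c' d') \<longleftrightarrow> (a, b, c, d) = (a', b', c', d')"
  by (auto simp: vec_eq_iff forall_2 rho_def corner_matrix_def)

lemma invertible_if_det_dvd_one:
  fixes M :: "'a::comm_ring_1 ^ 2 ^ 2"
  assumes "det M dvd 1"
  shows "invertible M"
proof -
  obtain u where u: "det M * u = 1"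
    using assms by (auto elim: dvdE)
  define N :: "'a ^ 2 ^ 2" where
    "N = (\<chi> i j. u * (if i = 1 then (if j = 1 then M $ 2 $ 2 else - M $ 1 $ 2)
                     else (if j = 1 then - M $ 2 $ 1 else M $ 1 $ 1)))"
  have "M ** N = mat 1" "N ** M = mat 1"
    using u by (simp_all add: N_def vec_eq_iff forall_2 matrix_matrix_mult_def mat_def sum_2 det_2
        algebra_simps)
  then show ?thesis
    unfolding invertible_def by blast
qed

theorem lemma3p8:
  shows "(\<forall>B\<in>meval_m1 ` formal_burau. invertible (rho B) \<and> det (rho B) = det B)
       \<and> (\<forall>B1\<in>meval_m1 ` formal_burau. \<forall>B2\<in>meval_m1 ` formal_burau.
            rho (B1 ** B2) = rho B1 ** rho B2)
       \<and> inj_on rho (meval_m1 ` formal_burau)"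
proof -
  have corner_form: "\<exists>a b c d. B = corner_matrix a b c d"
    and unit_det: "det B dvd 1" if "B \<in> meval_m1 ` formal_burau" for B
    using that formal_burau_eval corner_matrix_eq by blast+
  show ?thesis
  proof (intro conjI ballI inj_onI)
    fix B assume B: "B \<in> meval_m1 ` formal_burau"
    then obtain a b c d where "B = corner_matrix a b c d"
      using corner_form by blast
    then show det_rho: "det (rho B) = det B"
      by (simp only: det_rho_corner_matrix)
    show "invertible (rho B)"
      by (rule invertible_if_det_dvd_one) (simp only: det_rho unit_det[OF B])
  next
    fix B1 B2 assume "B1 \<in> meval_m1 ` formal_burau" "B2 \<in> meval_m1 ` formal_burau"
    then obtain a b c d a' b' c' d'
      where "B1 = corner_matrix a b c d" "B2 = corner_matrix a' b' c' d'"
      using corner_form by meson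
    then show "rho (B1 ** B2) = rho B1 ** rho B2"
      by (simp only: rho_corner_matrix_mult)
  next
    fix B1 B2 assume "B1 \<in> meval_m1 ` formal_burau" "B2 \<in> meval_m1 ` formal_burau"
      and "rho B1 = rho B2"
    moreover obtain a b c d a' b' c' d'
      where "B1 = corner_matrix a b c d" "B2 = corner_matrix a' b' c' d'"
      using corner_form calculation by meson
    ultimately show "B1 = B2"
      by (simp add: rho_corner_matrix_eq_iff)
  qed
qed

end
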